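(* Let $U$ be a nonempty finite set, $R\subseteq U\times U$ serial and transitive, and $r$ the rank function of the matroid $M(Reg(U,R))$. Then $r(X)=h(X)$ for every $X\in Reg(U,R)$.
   Context: $R_s(x)=\{y\in U\mid xRy\}$; $\underline{R}(X)=\{x\mid R_s(x)\subseteq X\}$, $\overline{R}(X)=\{x\mid R_s(x)\cap X\neq\emptyset\}$; $X$ is regular if $X=\underline{R}(\overline{R}(X))$, and $Reg(U,R)$ is the lattice of regular sets under inclusion, with least element $\emptyset$. $h(A)$ is the length of a maximal chain in $[\emptyset,A]$. $M(Reg(U,R))$ is the matroid on $U$ with independent sets $\mathbf{I}(Reg(U,R);h)=\{X\subseteq U\mid h(Y)\ge|X\cap Y|\ \forall Y\in Reg(U,R)\}$; its rank function is $r(X)=\max\{|I|\mid I\subseteq X,\ I\in\mathbf{I}\}$. *)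

theory Defs
  imports Main
begin

definition successors :: "('a \<times> 'a) set \<Rightarrow> 'a \<Rightarrow> 'a set" where
  "successors R x = {y. (x, y) \<in> R}"

definition lower_approx :: "'a set \<Rightarrow> ('a \<times> 'a) set \<Rightarrow> 'a set \<Rightarrow> 'a set" where
  "lower_approx U R X = {x \<in> U. successors R x \<subseteq> X}"

definition upper_approx :: "'a set \<Rightarrow> ('a \<times> 'a) set \<Rightarrow> 'a set \<Rightarrow> 'a set" where
  "upper_approx U R X = {x \<in> U. successors R x \<inter> X \<noteq> {}}"

definition Reg :: "'a set \<Rightarrow> ('a \<times> 'a) set \<Rightarrow> 'a set set" where
  "Reg U R = {X. X \<subseteq> U \<and> X = lower_approx U R (upper_approx U R X)}"

definition serial_on :: "'a set \<Rightarrow> ('a \<times> 'a) set \<Rightarrow> bool" where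
  "serial_on U R \<longleftrightarrow> (\<forall>x\<in>U. \<exists>y\<in>U. (x, y) \<in> R)"

definition is_chain :: "'a set set \<Rightarrow> bool" where
  "is_chain C \<longleftrightarrow> (\<forall>A\<in>C. \<forall>B\<in>C. A \<subseteq> B \<or> B \<subseteq> A)"

definition reg_height :: "'a set \<Rightarrow> ('a \<times> 'a) set \<Rightarrow> 'a set \<Rightarrow> nat" where
  "reg_height U R A = Max {card C - 1 | C. C \<subseteq> {Y \<in> Reg U R. Y \<subseteq> A} \<and> is_chain C \<and> C \<noteq> {}}"

definition reg_indep :: "'a set \<Rightarrow> ('a \<times> 'a) set \<Rightarrow> 'a set \<Rightarrow> bool" where
  "reg_indep U R X \<longleftrightarrow> X \<subseteq> U \<and> (\<forall>Y\<in>Reg U R. card (X \<inter> Y) \<le> reg_height U R Y)"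

definition reg_rank :: "'a set \<Rightarrow> ('a \<times> 'a) set \<Rightarrow> 'a set \<Rightarrow> nat" where
  "reg_rank U R X = Max {card I | I. I \<subseteq> X \<and> reg_indep U R I}"

end

theory Submission
  imports Defs
begin

(*
  Call t terminal if
  every successor of t is again a predecessor of t; the successors of a terminal point
  form a terminal strongly connected class, and every point reaches such a class.
  Choosing one representative in each terminal class gives a set Reps, and a set Y is
  regular iff it is the set of points all of whose reachable representatives lie in Y.
  Hence Y \<mapsto> Y \<inter> Reps is an order isomorphism from Reg(U,R) onto the power set of
  Reps, with inverse reg_of.  Consequently the height of a regular Y is |Y \<inter> Reps|,
  every subset of Reps is independent, and for regular X the independent set X \<inter> Reps
  attains the bound |I| = |I \<inter> X| \<le> h(X) valid for every independent I \<subseteq> X.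
*)

section \<open>Chains of subsets of a finite set\<close>

text \<open>A chain of subsets of a finite set A has at most |A| + 1 members,
  because distinct members of a chain have distinct cardinalities.\<close>
lemma chain_card_le:
  assumes "finite A" "C \<subseteq> Pow A" "is_chain C"
  shows "card C \<le> card A + 1"
proof -
  have "inj_on card C"
  proof (rule inj_onI)
    fix B1 B2 assume B: "B1 \<in> C" "B2 \<in> C" "card B1 = card B2"
    have fin: "finite B1" "finite B2"
      using B(1,2) assms(1,2) finite_subset by blast+
    have "B1 \<subseteq> B2 \<or> B2 \<subseteq> B1"
      using assms(3) B(1,2) unfolding is_chain_def by blast
    then show "B1 = B2"
      using card_subset_eq fin B(3) by metis
  qed
  moreover have "card ` C \<subseteq> {0..card A}"
  proof
    fix n assume "n \<in> card ` C"
    then obtain B where "B \<in> C" "n = card B" by blast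
    then show "n \<in> {0..card A}" using assms(2) card_mono[OF assms(1)] by auto
  qed
  then have "card (card ` C) \<le> card {0..card A}"
    by (intro card_mono) auto
  ultimately show ?thesis by (simp add: card_image)
qed

lemma chain_image:
  assumes "is_chain C" and mono: "\<And>A B. A \<subseteq> B \<Longrightarrow> f A \<subseteq> f B"
  shows "is_chain (f ` C)"
  unfolding is_chain_def
proof (intro ballI)
  fix A' B' assume "A' \<in> f ` C" "B' \<in> f ` C"
  then obtain A B where AB: "A \<in> C" "B \<in> C" "A' = f A" "B' = f B" by blast
  have "A \<subseteq> B \<or> B \<subseteq> A" using assms(1) AB(1,2) unfolding is_chain_def by blast
  then show "A' \<subseteq> B' \<or> B' \<subseteq> A'" using mono AB(3,4) by blast
qed

lemma chain_exists:
  assumes "finite A"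
  shows "\<exists>C. C \<subseteq> Pow A \<and> is_chain C \<and> card C = card A + 1"
  using assms
proof (induction A rule: finite_induct)
  case empty
  show ?case by (rule exI[of _ "{{}}"]) (simp add: is_chain_def)
next
  case (insert a F)
  then obtain C where C: "C \<subseteq> Pow F" "is_chain C" "card C = card F + 1" by blast
  have "finite C" using C(1) insert(1) by (meson finite_Pow_iff finite_subset)
  moreover have "insert a F \<notin> C" using C(1) insert(2) by blast
  ultimately have "card (insert (insert a F) C) = card (insert a F) + 1"
    using C(3) insert(1,2) by simp
  moreover have "insert (insert a F) C \<subseteq> Pow (insert a F)" using C(1) by blast
  moreover have "is_chain (insert (insert a F) C)"
    using C(1,2) unfolding is_chain_def by blast
  ultimately show ?case by blast
qed

lemma Max_nat_attained:
  fixes S :: "nat set"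
  assumes "\<And>n. n \<in> S \<Longrightarrow> n \<le> b" and "b \<in> S"
  shows "Max S = b"
proof -
  have "finite S"
    using assms(1) by (intro finite_subset[OF _ finite_atMost[of b]]) auto
  then show ?thesis
    by (rule Max_eqI) (use assms in auto)
qed

section \<open>Serial transitive relations on a finite set\<close>

locale serial_transitive =
  fixes U :: "'a set" and R :: "('a \<times> 'a) set"
  assumes finite_U: "finite U" and R_sub: "R \<subseteq> U \<times> U"
    and serial: "serial_on U R" and trans_R: "trans R"
begin

lemma R_trans: "(a, b) \<in> R \<Longrightarrow> (b, c) \<in> R \<Longrightarrow> (a, c) \<in> R"
  using trans_R by (meson transD)

lemma R_serial: "x \<in> U \<Longrightarrow> \<exists>y. (x, y) \<in> R"
  using serial unfolding serial_on_def by blast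

lemma R_in_U: "(a, b) \<in> R \<Longrightarrow> a \<in> U \<and> b \<in> U"
  using R_sub by blast

lemma Reg_iff:
  "Y \<in> Reg U R \<longleftrightarrow> Y \<subseteq> U \<and> Y = {x \<in> U. \<forall>y. (x, y) \<in> R \<longrightarrow> (\<exists>z\<in>Y. (y, z) \<in> R)}"
proof -
  have "lower_approx U R (upper_approx U R Y) = {x \<in> U. \<forall>y. (x, y) \<in> R \<longrightarrow> (\<exists>z\<in>Y. (y, z) \<in> R)}"
    unfolding lower_approx_def upper_approx_def successors_def using R_in_U by blast
  then show ?thesis unfolding Reg_def by simp
qed

definition terminal :: "'a \<Rightarrow> bool" where
  "terminal t \<longleftrightarrow> t \<in> U \<and> (\<forall>z. (t, z) \<in> R \<longrightarrow> (z, t) \<in> R)"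

text \<open>A chosen successor; for terminal t it depends only on the terminal class of t.\<close>
definition rep :: "'a \<Rightarrow> 'a" where
  "rep t = (SOME s. (t, s) \<in> R)"

text \<open>One representative for each terminal class.\<close>
definition Reps :: "'a set" where
  "Reps = rep ` {t. terminal t}"

lemma terminal_step: "terminal t \<Longrightarrow> (t, z) \<in> R \<Longrightarrow> terminal z \<and> (z, t) \<in> R"
  unfolding terminal_def using R_trans R_in_U by blast

text \<open>Every point reaches a terminal point: take a successor with the fewest successors;
  the successors of any of its successors are all of its own successors.\<close>
lemma reaches_terminal:
  assumes x: "x \<in> U"
  shows "\<exists>w. terminal w \<and> (x, w) \<in> R"
proof -
  obtain y0 where "(x, y0) \<in> R" using R_serial x by blast
  then obtain t where xt: "(x, t) \<in> R"
    and least: "\<And>y. (x, y) \<in> R \<Longrightarrow> card (successors R t) \<le> card (successors R y)"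
    using ex_has_least_nat[of "\<lambda>y. (x, y) \<in> R" y0 "\<lambda>y. card (successors R y)"] by metis
  have "successors R y \<subseteq> U" for y
    using R_in_U unfolding successors_def by blast
  then have fin: "finite (successors R y)" for y
    using finite_U finite_subset by metis
  have same: "successors R y = successors R t" if ty: "(t, y) \<in> R" for y
  proof -
    have sub: "successors R y \<subseteq> successors R t"
      using R_trans[OF ty] unfolding successors_def by blast
    moreover have "card (successors R t) \<le> card (successors R y)"
      using least R_trans[OF xt ty] by blast
    ultimately show ?thesis by (rule card_seteq[OF fin])
  qed
  obtain w where tw: "(t, w) \<in> R" using R_serial R_in_U[OF xt] by blast
  have "terminal w"
    unfolding terminal_def
  proof (intro conjI allI impI)
    show "w \<in> U" using R_in_U[OF tw] by blast
    fix z assume "(w, z) \<in> R"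
    then have "w \<in> successors R z"
      using same[OF R_trans[OF tw]] tw unfolding successors_def by blast
    then show "(z, w) \<in> R" unfolding successors_def by blast
  qed
  then show ?thesis using R_trans[OF xt tw] by blast
qed

lemma rep_succ: "terminal t \<Longrightarrow> (t, rep t) \<in> R"
  unfolding rep_def terminal_def using R_serial by (metis someI)

text \<open>Within a terminal class all points have the same successors, hence the same rep.\<close>
lemma rep_class: "terminal t \<Longrightarrow> (t, s) \<in> R \<Longrightarrow> rep s = rep t"
proof -
  assume ts: "terminal t" "(t, s) \<in> R"
  moreover have "(s, t) \<in> R" using terminal_step[OF ts] by blast
  ultimately have "(\<lambda>u. (s, u) \<in> R) = (\<lambda>u. (t, u) \<in> R)"
    using R_trans[of t s] R_trans[of s t] ts(2) by (intro ext) blast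
  then show ?thesis unfolding rep_def by simp
qed

lemma Reps_terminal: "r \<in> Reps \<Longrightarrow> terminal r \<and> rep r = r"
proof -
  assume "r \<in> Reps"
  then obtain t where t: "terminal t" "r = rep t" unfolding Reps_def by blast
  then have "(t, r) \<in> R" using rep_succ by blast
  then show ?thesis using rep_class t terminal_step by blast
qed

lemma Reps_U: "Reps \<subseteq> U"
proof
  fix r assume "r \<in> Reps"
  then show "r \<in> U" using Reps_terminal unfolding terminal_def by blast
qed

lemma finite_Reps: "finite Reps"
  using finite_subset[OF Reps_U finite_U] .

lemma Reps_refl: "r \<in> Reps \<Longrightarrow> (r, r) \<in> R"
  using Reps_terminal[of r] rep_succ[of r] by simp

lemma Reps_unique: "r \<in> Reps \<Longrightarrow> s \<in> Reps \<Longrightarrow> (r, s) \<in> R \<Longrightarrow> r = s"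
  using Reps_terminal[of r] Reps_terminal[of s] rep_class[of r s] by simp

lemma reaches_Reps: "y \<in> U \<Longrightarrow> \<exists>r\<in>Reps. (y, r) \<in> R"
proof -
  assume "y \<in> U"
  then obtain w where "terminal w" "(y, w) \<in> R" using reaches_terminal by blast
  then have "rep w \<in> Reps" "(y, rep w) \<in> R"
    using rep_succ R_trans unfolding Reps_def by blast+
  then show ?thesis by blast
qed

lemma Reps_back: "r \<in> Reps \<Longrightarrow> (r, z) \<in> R \<Longrightarrow> (z, r) \<in> R"
  using Reps_terminal[of r] terminal_step[of r z] by blast

subsection \<open>Regular sets correspond to sets of representatives\<close>

definition reg_of :: "'a set \<Rightarrow> 'a set" where
  "reg_of A = {x \<in> U. \<forall>t\<in>Reps. (x, t) \<in> R \<longrightarrow> t \<in> A}"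

lemma reg_of_mono: "A \<subseteq> B \<Longrightarrow> reg_of A \<subseteq> reg_of B"
  unfolding reg_of_def by blast

lemma Reg_eq_reg_of:
  assumes Y: "Y \<in> Reg U R"
  shows "Y = reg_of (Y \<inter> Reps)"
proof -
  have mem: "x \<in> Y \<longleftrightarrow> x \<in> U \<and> (\<forall>y. (x, y) \<in> R \<longrightarrow> (\<exists>z\<in>Y. (y, z) \<in> R))" for x
    using Y Reg_iff by blast
  have Reps_in: "t \<in> Y" if x: "x \<in> Y" and t: "t \<in> Reps" "(x, t) \<in> R" for x t
  proof -
    obtain z where z: "z \<in> Y" "(t, z) \<in> R" using mem x t(2) by blast
    have "\<exists>z'\<in>Y. (y, z') \<in> R" if "(t, y) \<in> R" for y
      using Reps_back[OF t(1) that] z R_trans by blast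
    then show "t \<in> Y" using mem Reps_U t(1) by blast
  qed
  have "x \<in> Y" if x: "x \<in> reg_of (Y \<inter> Reps)" for x
  proof -
    have "\<exists>z\<in>Y. (y, z) \<in> R" if xy: "(x, y) \<in> R" for y
      using reaches_Reps[of y] R_in_U[OF xy] R_trans[OF xy] x unfolding reg_of_def by blast
    then show ?thesis using mem x unfolding reg_of_def by blast
  qed
  with Reps_in show ?thesis using Y unfolding Reg_def reg_of_def by blast
qed

lemma reg_of_Reg: "reg_of A \<in> Reg U R"
proof -
  have "x \<in> reg_of A \<longleftrightarrow> x \<in> U \<and> (\<forall>y. (x, y) \<in> R \<longrightarrow> (\<exists>z\<in>reg_of A. (y, z) \<in> R))" for x
  proof
    assume x: "x \<in> reg_of A"
    have "\<exists>z\<in>reg_of A. (y, z) \<in> R" if xy: "(x, y) \<in> R" for y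
    proof -
      obtain r where r: "r \<in> Reps" "(y, r) \<in> R" using reaches_Reps R_in_U[OF xy] by blast
      have "r \<in> A" using x R_trans[OF xy r(2)] r(1) unfolding reg_of_def by blast
      then have "r \<in> reg_of A" using r(1) Reps_U Reps_unique unfolding reg_of_def by blast
      then show ?thesis using r(2) by blast
    qed
    then show "x \<in> U \<and> (\<forall>y. (x, y) \<in> R \<longrightarrow> (\<exists>z\<in>reg_of A. (y, z) \<in> R))"
      using x unfolding reg_of_def by blast
  next
    assume "x \<in> U \<and> (\<forall>y. (x, y) \<in> R \<longrightarrow> (\<exists>z\<in>reg_of A. (y, z) \<in> R))"
    then show "x \<in> reg_of A"
      using Reps_back unfolding reg_of_def by blast
  qed
  moreover have "reg_of A \<subseteq> U" unfolding reg_of_def by blast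
  ultimately show ?thesis using Reg_iff by blast
qed

lemma reg_of_Reps: "A \<subseteq> Reps \<Longrightarrow> reg_of A \<inter> Reps = A"
  using Reps_refl Reps_unique Reps_U unfolding reg_of_def by blast

text \<open>A chain of regular subsets of Y is at most as long as a chain of subsets of
  Y \<inter> Reps, since intersecting with Reps is injective and monotone on regular sets.\<close>
lemma reg_chain_card_le:
  assumes C: "C \<subseteq> {Z \<in> Reg U R. Z \<subseteq> Y}" "is_chain C"
  shows "card C \<le> card (Y \<inter> Reps) + 1"
proof -
  have "inj_on (\<lambda>Z. Z \<inter> Reps) C"
    using C(1) Reg_eq_reg_of by (intro inj_onI) (metis (no_types, lifting) mem_Collect_eq subsetD)
  moreover have "card ((\<lambda>Z. Z \<inter> Reps) ` C) \<le> card (Y \<inter> Reps) + 1"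
  proof (rule chain_card_le)
    show "finite (Y \<inter> Reps)" by (simp add: finite_Reps)
    show "(\<lambda>Z. Z \<inter> Reps) ` C \<subseteq> Pow (Y \<inter> Reps)" using C(1) by blast
    show "is_chain ((\<lambda>Z. Z \<inter> Reps) ` C)" by (rule chain_image[OF C(2)]) blast
  qed
  ultimately show ?thesis using card_image by fastforce
qed

text \<open>The bound is attained: reg_of maps a maximal chain of subsets of Y \<inter> Reps to a
  chain of regular subsets of Y of the same length.\<close>
lemma reg_chain_exists:
  assumes Y: "Y \<in> Reg U R"
  shows "\<exists>C. C \<subseteq> {Z \<in> Reg U R. Z \<subseteq> Y} \<and> is_chain C \<and> card C = card (Y \<inter> Reps) + 1"
proof -
  obtain C where C: "C \<subseteq> Pow (Y \<inter> Reps)" "is_chain C" "card C = card (Y \<inter> Reps) + 1"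
    using chain_exists[of "Y \<inter> Reps"] finite_Reps by auto
  have "inj_on reg_of C"
  proof (rule inj_onI)
    fix A B assume "A \<in> C" "B \<in> C" "reg_of A = reg_of B"
    moreover have "A \<subseteq> Reps" "B \<subseteq> Reps" using C(1) \<open>A \<in> C\<close> \<open>B \<in> C\<close> by auto
    ultimately show "A = B" using reg_of_Reps by metis
  qed
  then have "card (reg_of ` C) = card (Y \<inter> Reps) + 1" using C(3) by (simp add: card_image)
  moreover have "reg_of ` C \<subseteq> {Z \<in> Reg U R. Z \<subseteq> Y}"
  proof
    fix Z assume "Z \<in> reg_of ` C"
    then obtain A where "A \<in> C" "Z = reg_of A" by blast
    then have "Z \<subseteq> reg_of (Y \<inter> Reps)" using C(1) reg_of_mono[of A "Y \<inter> Reps"] by auto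
    then show "Z \<in> {Z \<in> Reg U R. Z \<subseteq> Y}"
      using reg_of_Reg \<open>Z = reg_of A\<close> Reg_eq_reg_of[OF Y] by simp
  qed
  moreover have "is_chain (reg_of ` C)" using chain_image[OF C(2) reg_of_mono] .
  ultimately show ?thesis by blast
qed

lemma reg_height_eq:
  assumes Y: "Y \<in> Reg U R"
  shows "reg_height U R Y = card (Y \<inter> Reps)"
  unfolding reg_height_def
proof (rule Max_nat_attained)
  fix n assume "n \<in> {card C - 1 | C. C \<subseteq> {Y' \<in> Reg U R. Y' \<subseteq> Y} \<and> is_chain C \<and> C \<noteq> {}}"
  then obtain C where "n = card C - 1" "C \<subseteq> {Y' \<in> Reg U R. Y' \<subseteq> Y}" "is_chain C"
    by auto
  then show "n \<le> card (Y \<inter> Reps)" using reg_chain_card_le[of C Y] by linarith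
next
  obtain C where C: "C \<subseteq> {Z \<in> Reg U R. Z \<subseteq> Y}" "is_chain C" "card C = card (Y \<inter> Reps) + 1"
    using reg_chain_exists[OF Y] by auto
  then have "C \<noteq> {}" by auto
  with C show "card (Y \<inter> Reps) \<in> {card C - 1 | C. C \<subseteq> {Y' \<in> Reg U R. Y' \<subseteq> Y} \<and> is_chain C \<and> C \<noteq> {}}"
    by (intro CollectI exI[of _ C]) simp
qed

lemma Reps_indep:
  assumes "S \<subseteq> Reps"
  shows "reg_indep U R S"
  unfolding reg_indep_def
proof (intro conjI ballI)
  show "S \<subseteq> U" using assms Reps_U by blast
  fix Y assume Y: "Y \<in> Reg U R"
  have "finite (Y \<inter> Reps)" by (simp add: finite_Reps)
  then have "card (S \<inter> Y) \<le> card (Y \<inter> Reps)" using assms by (intro card_mono) auto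
  then show "card (S \<inter> Y) \<le> reg_height U R Y" using reg_height_eq[OF Y] by simp
qed

end

text \<open>Independent subsets of X have at most h(X) elements, and X \<inter> Reps is an
  independent subset of exactly h(X) elements.\<close>
theorem proposition4:
  fixes U :: "'a set" and R :: "('a \<times> 'a) set"
  assumes "finite U" and "U \<noteq> {}"
    and "R \<subseteq> U \<times> U" and "serial_on U R" and "trans R"
    and "X \<in> Reg U R"
  shows "reg_rank U R X = reg_height U R X"
proof -
  interpret serial_transitive U R using assms by unfold_locales
  have bound: "card I \<le> reg_height U R X" if "I \<subseteq> X" "reg_indep U R I" for I
  proof -
    have "card (I \<inter> X) \<le> reg_height U R X"
      using that(2) assms(6) unfolding reg_indep_def by blast
    moreover have "I \<inter> X = I" using that(1) by blast
    ultimately show ?thesis by simp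
  qed
  have "X \<inter> Reps \<subseteq> X" "reg_indep U R (X \<inter> Reps)"
    using Reps_indep[of "X \<inter> Reps"] by auto
  then have attained: "reg_height U R X \<in> {card I | I. I \<subseteq> X \<and> reg_indep U R I}"
    unfolding reg_height_eq[OF assms(6)] by blast
  show ?thesis
    unfolding reg_rank_def using bound attained by (intro Max_nat_attained) auto
qed

end
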